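(* Let $Q_0\subset\mathbb{R}^d$ be a cube and $k \in \mathbb{N} \cap [1,d]$. There is a constant $C>0$ such that if $u \in BMO^k(Q_0)$, then for any $k$-dimensional affine plane $H_k$ parallel to $Q_0$, $u|_{Q_0\cap H_k} \in BMO(Q_0\cap H_k)$ and $$\|u|_{Q_0\cap H_k}\|_{BMO(Q_0\cap H_k)} \leq C\|u\|_{BMO^k(Q_0)}.$$ In the case $k=d$, one has $$\frac{1}{C} \|u\|_{BMO^d(Q_0)} \leq \|u\|_{BMO(Q_0)} \leq C \|u\|_{BMO^d(Q_0)},$$ so that $BMO^d(Q_0) = BMO(Q_0)$.
   Context: For $\beta\in(0,d]$ and $E\subset\mathbb{R}^d$, $\mathcal{H}^{\beta}_{\infty}(E)= \inf \{\sum_{i} \omega_\beta r_i^\beta : E \subset \bigcup_{i} B(x_i,r_i) \}$, $\omega_\beta= \pi^{\beta/2}/\Gamma(\beta/2+1)$. A function $f$ is $\mathcal{H}^\beta_\infty$-quasicontinuous if for every $\epsilon>0$ there is an open $O$ with $\mathcal{H}^\beta_\infty(O)<\epsilon$ and $f|_{O^c}$ continuous. Choquet integral: $\int_A f\,d\mathcal{H}^\beta_\infty=\int_0^\infty \mathcal{H}^\beta_\infty(\{x\in A: f(x)>t\})\,dt$ for $f\ge0$. $L^1(Q_0;\mathcal{H}^\beta_\infty)$: quasicontinuous $f$ with $\int_{Q_0}|f|\,d\mathcal{H}^\beta_\infty<\infty$. $\|u\|_{BMO^{\beta}(Q_0)}= \sup_{Q} \inf_{c \in \mathbb{R}} l(Q)^{-\beta}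 \int_{Q} |u-c| \,d\mathcal{H}^{\beta}_\infty$ over finite subcubes $Q\subset Q_0$ with sides parallel to those of $Q_0$ ($l(Q)$ = side length), and $BMO^\beta(Q_0)$ is the set of $u\in L^1(Q_0;\mathcal{H}^\beta_\infty)$ where it is finite. A $k$-dimensional affine plane parallel to $Q_0$ is a translate of the span of $k$ of the edge directions of $Q_0$. $BMO(Q_0\cap H_k)$ is the classical John–Nirenberg space: functions $v$ locally integrable with respect to the $k$-dimensional Hausdorff measure $\mathcal{H}^k$ on $Q_0\cap H_k$ with $\|v\|_{BMO(Q_0\cap H_k)}=\sup_{Q'}\frac{1}{\mathcal{H}^k(Q')}\int_{Q'}|v-v_{Q'}|\,d\mathcal{H}^k<\infty$, the supremum over $k$-dimensional cubes $Q'\subset Q_0\cap H_k$ with sides parallel to edges of $Q_0$, $v_{Q'}$ the $\mathcal{H}^k$-average of $v$ on $Q'$; for $k=d$ this is the usual $BMO(Q_0)$ with Lebesgue measure. *)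

theory Defs
  imports "HOL-Analysis.Analysis"
begin

definition omega :: "real \<Rightarrow> real" where
  "omega \<beta> = pi powr (\<beta> / 2) / Gamma (\<beta> / 2 + 1)"

definition hcontent :: "real \<Rightarrow> 'a::metric_space set \<Rightarrow> ennreal" where
  "hcontent \<beta> E =
     (INF p \<in> {(x, r). (\<forall>i::nat. 0 \<le> r i) \<and> E \<subseteq> (\<Union>i. ball (x i) (r i))}.
        (\<Sum>i. ennreal (omega \<beta> * (snd p i) powr \<beta>)))"

definition hc_quasicontinuous_on :: "real \<Rightarrow> 'a::metric_space set \<Rightarrow> ('a \<Rightarrow> real) \<Rightarrow> bool" where
  "hc_quasicontinuous_on \<beta> A f \<longleftrightarrow>
     (\<forall>\<epsilon>>0. \<exists>U. open U \<and> hcontent \<beta> U < ennreal \<epsilon> \<and> continuous_on (A - U) f)"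

definition choquet :: "real \<Rightarrow> 'a::metric_space set \<Rightarrow> ('a \<Rightarrow> real) \<Rightarrow> ennreal" where
  "choquet \<beta> A f = set_nn_integral lborel {0<..} (\<lambda>t. hcontent \<beta> {x \<in> A. f x > t})"

definition L1_content :: "real \<Rightarrow> 'a::metric_space set \<Rightarrow> ('a \<Rightarrow> real) \<Rightarrow> bool" where
  "L1_content \<beta> A u \<longleftrightarrow> hc_quasicontinuous_on \<beta> A u \<and> choquet \<beta> A (\<lambda>x. \<bar>u x\<bar>) < top"

definition cube :: "real^'n \<Rightarrow> real \<Rightarrow> (real^'n) set" where
  "cube c r = {x. \<forall>i. c$i \<le> x$i \<and> x$i \<le> c$i + r}"

definition subcube_data :: "(real^'n) set \<Rightarrow> ((real^'n) \<times> real) set" where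
  "subcube_data Q0 = {(c, r). 0 < r \<and> cube c r \<subseteq> Q0}"

definition subcubes :: "(real^'n) set \<Rightarrow> (real^'n) set set" where
  "subcubes Q0 = (\<lambda>(c, r). cube c r) ` subcube_data Q0"

definition bmo_content_norm :: "real \<Rightarrow> (real^'n) set \<Rightarrow> (real^'n \<Rightarrow> real) \<Rightarrow> ennreal" where
  "bmo_content_norm \<beta> Q0 u =
     (SUP p \<in> subcube_data Q0. INF c' \<in> (UNIV :: real set).
        ennreal ((snd p) powr (- \<beta>)) * choquet \<beta> (cube (fst p) (snd p)) (\<lambda>x. \<bar>u x - c'\<bar>))"

definition BMO_content :: "real \<Rightarrow> (real^'n) set \<Rightarrow> (real^'n \<Rightarrow> real) set" where
  "BMO_content \<beta> Q0 = {u. L1_content \<beta> Q0 u \<and> bmo_content_norm \<beta> Q0 u < top}"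

definition bmo_norm :: "'a measure \<Rightarrow> 'a set set \<Rightarrow> ('a \<Rightarrow> real) \<Rightarrow> ennreal" where
  "bmo_norm M Qs v =
     (SUP Q \<in> Qs. ennreal ((LINT x:Q|M. \<bar>v x - (LINT y:Q|M. v y) / measure M Q\<bar>) / measure M Q))"

definition BMO_classical :: "'a measure \<Rightarrow> 'a set set \<Rightarrow> ('a \<Rightarrow> real) set" where
  "BMO_classical M Qs = {v. (\<forall>Q\<in>Qs. set_integrable M Q v) \<and> bmo_norm M Qs v < top}"

definition plane :: "'n set \<Rightarrow> real^'n \<Rightarrow> (real^'n) set" where
  "plane S a = {x. \<forall>i. i \<notin> S \<longrightarrow> x$i = a$i}"

definition plane_cube :: "'n set \<Rightarrow> real^'n \<Rightarrow> real \<Rightarrow> (real^'n) set" where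
  "plane_cube S c r = {x. (\<forall>i\<in>S. c$i \<le> x$i \<and> x$i \<le> c$i + r) \<and> (\<forall>i. i \<notin> S \<longrightarrow> x$i = c$i)}"

definition plane_cubes :: "'n set \<Rightarrow> real^'n \<Rightarrow> (real^'n) set \<Rightarrow> (real^'n) set set" where
  "plane_cubes S a Q0 =
     {plane_cube S c r | c r. 0 < r \<and> (\<forall>i. i \<notin> S \<longrightarrow> c$i = a$i) \<and> plane_cube S c r \<subseteq> Q0}"

text \<open>k-dimensional Hausdorff measure on the axis-parallel plane (plane S a): the (completed)
  image of k-dimensional Lebesgue measure under the isometric embedding of R^S.\<close>
definition plane_measure :: "'n set \<Rightarrow> real^'n \<Rightarrow> (real^'n) measure" where
  "plane_measure S a =
     completion (distr (Pi\<^sub>M S (\<lambda>_. lborel)) borel (\<lambda>y. \<chi> i. if i \<in> S then y i else a$i))"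

end

theory Submission
  imports Defs
begin

(* The seminorms are compared through measures mu with the growth bound
   mu(B(x,r)) <= K omega_beta r^beta: Lebesgue measure (beta = d, K = 1) and the k-dimensional
   measure on an axis-parallel k-plane (beta = k, K = 2^k / omega_k).  For such mu, covering a
   set by balls gives mu <= K H^beta_inf, so by the layer-cake formula the mu-integral of a
   nonnegative function is at most K times its Choquet integral; and sets of zero content are
   mu-null, so content-quasicontinuous functions are mu-measurable.  A k-cube of side l in the
   plane lies in a d-cube of side l inside Q0 and has mu-measure l^k, hence every mean
   oscillation of u on the plane is at most 2K times the BMO^k seminorm of u.
   Conversely, for beta = d, covering a measurable set almost optimally by dyadic cubes and
   each cube by a single ball gives H^d_inf <= C |.|, which bounds Choquet integrals by
   Lebesgue integrals and yields the reverse inequality; Lusin's theorem makes Lebesgue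
   measurable functions H^d_inf-quasicontinuous, so BMO(Q0) is contained in BMO^d(Q0). *)

lemma ennreal_le_mult_INF:
  fixes c :: ennreal
  assumes "0 < c" "c < top" "\<And>i. i \<in> A \<Longrightarrow> x \<le> c * f i"
  shows "x \<le> c * (INF i\<in>A. f i)"
proof -
  have "x / c \<le> (INF i\<in>A. f i)"
    using assms by (intro INF_greatest) (simp add: divide_le_posI_ennreal mult.commute)
  then show ?thesis
    using assms by (metis (no_types, opaque_lifting) ennreal_times_divide mult.commute
        mult_divide_eq_ennreal mult_right_mono not_less_zero top.extremum_strict zero_le)
qed

lemma ennreal_le_mult_weaken: "x \<le> ennreal a * y \<Longrightarrow> a \<le> b \<Longrightarrow> x \<le> ennreal b * y"
  by (erule order_trans) (intro mult_right_mono ennreal_leI; simp)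

lemma ennreal_inverse_mult_le: "0 < c \<Longrightarrow> x \<le> ennreal c * y \<Longrightarrow> ennreal (1 / c) * x \<le> y"
  by (drule mult_left_mono[of _ _ "ennreal (1 / c)"])
    (simp_all add: mult.assoc[symmetric] ennreal_mult[symmetric])

lemma borel_measurable_antimono:
  fixes g :: "real \<Rightarrow> 'b::{linorder_topology, second_countable_topology}"
  assumes "antimono g"
  shows "g \<in> borel_measurable borel"
proof (rule borel_measurableI_greater)
  fix a :: 'b
  have "is_interval {x. a < g x}"
    unfolding is_interval_1 using assms by (auto dest: antimonoD intro: less_le_trans)
  then show "{x \<in> space borel. a < g x} \<in> sets borel"
    by (simp add: real_interval_borel_measurable)
qed

lemma (in complete_measure) measurable_AE_cong:
  assumes f: "f \<in> M \<rightarrow>\<^sub>M N" and ae: "AE x in M. f x = g x" and g: "g \<in> space M \<rightarrow> space N"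
  shows "g \<in> M \<rightarrow>\<^sub>M N"
proof (rule measurableI)
  show "x \<in> space M \<Longrightarrow> g x \<in> space N" for x
    using g by auto
  fix S assume S: "S \<in> sets N"
  have "AE x in M. x \<in> f -` S \<inter> space M \<longleftrightarrow> x \<in> g -` S \<inter> space M"
    using ae by eventually_elim auto
  then show "g -` S \<inter> space M \<in> sets M"
    by (rule in_sets_AE) (auto intro: measurable_sets[OF f S])
qed

lemma nn_integral_layer_cake:
  fixes f :: "'a \<Rightarrow> real"
  assumes f: "f \<in> borel_measurable M" and nn: "\<And>x. 0 \<le> f x"
    and A: "A \<in> sets M" and fin: "emeasure M A < \<infinity>"
  shows "(\<integral>\<^sup>+x. indicator A x * ennreal (f x) \<partial>M) =
         set_nn_integral lborel {0<..} (\<lambda>t. emeasure M {x \<in> A. f x > t})"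
proof -
  define N where "N = density M (indicator A)"
  have sets_N: "sets N = sets M" and space_N: "space N = space M"
    unfolding N_def by auto
  have emeasure_N: "emeasure N X = emeasure M (A \<inter> X)" if "X \<in> sets M" for X
    unfolding N_def using A that by (rule emeasure_restricted)
  interpret N: finite_measure N
  proof
    show "emeasure N (space N) \<noteq> \<infinity>"
      using emeasure_N[of "space M"] A fin by (simp add: space_N sets.Int_space_eq2)
  qed
  interpret pair_sigma_finite N lborel ..
  define F where "F x t = (indicator {(x, t). 0 < t \<and> t < f x} (x, t) :: ennreal)" for x t
  have fN: "f \<in> borel_measurable N"
    using f by (simp add: measurable_cong_sets[OF sets_N refl])
  have "(\<lambda>(x, t). F x t) \<in> borel_measurable (N \<Otimes>\<^sub>M lborel)"
    unfolding F_def using fN by measurable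
  then have Fubini: "(\<integral>\<^sup>+ t. \<integral>\<^sup>+ x. F x t \<partial>N \<partial>lborel) = (\<integral>\<^sup>+ x. \<integral>\<^sup>+ t. F x t \<partial>lborel \<partial>N)"
    by (rule Fubini')
  have inner_t: "(\<integral>\<^sup>+ t. F x t \<partial>lborel) = ennreal (f x)" for x
  proof -
    have "(\<integral>\<^sup>+ t. F x t \<partial>lborel) = (\<integral>\<^sup>+ t. indicator {0<..<f x} t \<partial>lborel)"
      unfolding F_def by (intro nn_integral_cong) (auto simp: indicator_def)
    then show ?thesis
      using nn[of x] by simp
  qed
  have inner_x: "(\<integral>\<^sup>+ x. F x t \<partial>N) = emeasure M {x \<in> A. f x > t} * indicator {0<..} t" for t
  proof (cases "0 < t")
    case True
    have "(\<integral>\<^sup>+ x. F x t \<partial>N) = (\<integral>\<^sup>+ x. indicator {x \<in> space M. t < f x} x \<partial>N)"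
      unfolding F_def using True by (intro nn_integral_cong) (auto simp: space_N indicator_def)
    also have "\<dots> = emeasure N {x \<in> space M. t < f x}"
      using f by (intro nn_integral_indicator) (simp add: sets_N)
    also have "\<dots> = emeasure M (A \<inter> {x \<in> space M. t < f x})"
      using f by (intro emeasure_N) measurable
    also have "A \<inter> {x \<in> space M. t < f x} = {x \<in> A. f x > t}"
      using A sets.sets_into_space by auto
    finally show ?thesis
      using True by simp
  qed (simp add: F_def indicator_def)
  have "(\<integral>\<^sup>+x. indicator A x * ennreal (f x) \<partial>M) = (\<integral>\<^sup>+ x. ennreal (f x) \<partial>N)"
    unfolding N_def using A f by (subst nn_integral_density) auto
  also have "\<dots> = (\<integral>\<^sup>+ t. \<integral>\<^sup>+ x. F x t \<partial>N \<partial>lborel)"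
    by (simp add: Fubini inner_t)
  also have "\<dots> = set_nn_integral lborel {0<..} (\<lambda>t. emeasure M {x \<in> A. f x > t})"
    by (simp add: inner_x)
  finally show ?thesis .
qed

section \<open>Hausdorff content and the Choquet integral\<close>

lemma hcontent_mono: "A \<subseteq> B \<Longrightarrow> hcontent \<beta> A \<le> hcontent \<beta> B"
  unfolding hcontent_def by (rule INF_superset_mono) auto

lemma hcontent_le_cover:
  assumes "\<And>i. 0 \<le> r i" "E \<subseteq> (\<Union>i. ball (x i) (r i))"
  shows "hcontent \<beta> E \<le> (\<Sum>i. ennreal (omega \<beta> * r i powr \<beta>))"
  unfolding hcontent_def by (rule INF_lower2[of "(x, r)"]) (use assms in auto)

lemma emeasure_le_hcontent:
  fixes M :: "'a::metric_space measure"
  assumes balls: "\<And>x r. ball x r \<in> sets M" and E: "E \<in> sets M" and K: "0 < K"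
    and growth: "\<And>x r. 0 \<le> r \<Longrightarrow> emeasure M (ball x r) \<le> ennreal K * ennreal (omega \<beta> * r powr \<beta>)"
  shows "emeasure M E \<le> ennreal K * hcontent \<beta> E"
  unfolding hcontent_def
proof (rule ennreal_le_mult_INF)
  show "0 < ennreal K" "ennreal K < top"
    using K by auto
  fix p :: "(nat \<Rightarrow> 'a) \<times> (nat \<Rightarrow> real)"
  assume "p \<in> {(x, r). (\<forall>i. 0 \<le> r i) \<and> E \<subseteq> (\<Union>i. ball (x i) (r i))}"
  then obtain x r where p: "p = (x, r)" and r: "\<And>i. 0 \<le> r i" and cover: "E \<subseteq> (\<Union>i. ball (x i) (r i))"
    by auto
  have "(\<Union>i. ball (x i) (r i)) \<in> sets M"
    using balls by (intro sets.countable_UN) auto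
  then have "emeasure M E \<le> emeasure M (\<Union>i. ball (x i) (r i))"
    using cover by (rule emeasure_mono[rotated])
  also have "\<dots> \<le> (\<Sum>i. emeasure M (ball (x i) (r i)))"
    using balls by (intro emeasure_subadditive_countably) auto
  also have "\<dots> \<le> (\<Sum>i. ennreal K * ennreal (omega \<beta> * r i powr \<beta>))"
    by (intro suminf_le growth r) auto
  also have "\<dots> = ennreal K * (\<Sum>i. ennreal (omega \<beta> * snd p i powr \<beta>))"
    by (simp add: p ennreal_suminf_cmult)
  finally show "emeasure M E \<le> ennreal K * (\<Sum>i. ennreal (omega \<beta> * snd p i powr \<beta>))" .
qed

lemma omega_eq_unit_ball_vol: "omega = unit_ball_vol"
  by (simp add: fun_eq_iff omega_def unit_ball_vol_def)

lemma omega_pos: "0 \<le> \<beta> \<Longrightarrow> 0 < omega \<beta>"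
  by (simp add: omega_eq_unit_ball_vol)

lemma choquet_cong: "(\<And>x. x \<in> A \<Longrightarrow> f x = g x) \<Longrightarrow> choquet \<beta> A f = choquet \<beta> A g"
  unfolding choquet_def by (metis (no_types, lifting) Collect_cong)

lemma choquet_mono_set: "A \<subseteq> B \<Longrightarrow> choquet \<beta> A f \<le> choquet \<beta> B f"
  unfolding choquet_def by (intro nn_integral_mono mult_right_mono hcontent_mono) auto

lemma borel_measurable_hcontent_superlevel:
  fixes f :: "'a::metric_space \<Rightarrow> real"
  shows "(\<lambda>t. hcontent \<beta> {x \<in> A. f x > t}) \<in> borel_measurable borel"
  by (rule borel_measurable_antimono) (auto intro!: antimonoI hcontent_mono)

lemma nn_integral_le_choquet:
  fixes M :: "'a::metric_space measure" and f :: "'a \<Rightarrow> real"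
  assumes balls: "\<And>x r. ball x r \<in> sets M" and K: "0 < K"
    and growth: "\<And>x r. 0 \<le> r \<Longrightarrow> emeasure M (ball x r) \<le> ennreal K * ennreal (omega \<beta> * r powr \<beta>)"
    and f: "f \<in> borel_measurable M" and nn: "\<And>x. 0 \<le> f x"
    and A: "A \<in> sets M" and fin: "emeasure M A < \<infinity>"
  shows "(\<integral>\<^sup>+x. indicator A x * ennreal (f x) \<partial>M) \<le> ennreal K * choquet \<beta> A f"
proof -
  have levels: "{x \<in> A. f x > t} \<in> sets M" for t
  proof -
    have "{x \<in> A. f x > t} = A \<inter> {x \<in> space M. t < f x}"
      using A sets.sets_into_space by auto
    also have "\<dots> \<in> sets M"
      using A f by measurable
    finally show ?thesis .
  qed
  have "(\<integral>\<^sup>+x. indicator A x * ennreal (f x) \<partial>M) =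
         set_nn_integral lborel {0<..} (\<lambda>t. emeasure M {x \<in> A. f x > t})"
    by (rule nn_integral_layer_cake[OF f nn A fin])
  also have "\<dots> \<le> set_nn_integral lborel {0<..} (\<lambda>t. ennreal K * hcontent \<beta> {x \<in> A. f x > t})"
    by (intro nn_integral_mono mult_right_mono emeasure_le_hcontent[OF balls levels K growth]) auto
  also have "\<dots> = ennreal K * choquet \<beta> A f"
    unfolding choquet_def using borel_measurable_hcontent_superlevel[of \<beta> A f]
    by (simp add: nn_integral_cmult[symmetric] mult.assoc)
  finally show ?thesis .
qed

section \<open>Hausdorff content versus Lebesgue measure\<close>

lemma cube_cbox: "cube c r = cbox c (\<chi> i. c$i + r)"
  by (auto simp: cube_def mem_box_cart)

lemma interior_cube: "interior (cube c r) = box c (\<chi> i. c$i + r)"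
  by (simp add: cube_cbox)

lemma emeasure_lborel_box_cube:
  fixes c :: "real^'n"
  assumes "0 \<le> r"
  shows "emeasure lborel (box c (\<chi> i. c$i + r)) = ennreal (r ^ CARD('n))"
proof -
  have side: "((\<chi> i. c$i + r) - c) \<bullet> b = r" if "b \<in> Basis" for b :: "real^'n"
    using that by (auto simp: Basis_vec_def inner_axis)
  have "emeasure lborel (box c (\<chi> i. c$i + r)) = ennreal (\<Prod>b\<in>Basis. ((\<chi> i. c$i + r) - c) \<bullet> b)"
    using side assms by (intro emeasure_lborel_box) (metis inner_diff_left diff_ge_0_iff_ge)
  also have "(\<Prod>b\<in>Basis. ((\<chi> i. c$i + r) - c) \<bullet> b) = (\<Prod>b\<in>(Basis :: (real^'n) set). r)"
    by (intro prod.cong refl side)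
  finally show ?thesis
    by simp
qed

lemma emeasure_lborel_ball_cart:
  fixes x :: "real^'n"
  assumes "0 \<le> r"
  shows "emeasure lborel (ball x r) = ennreal (omega (real CARD('n)) * r powr real CARD('n))"
  using assms by (simp add: emeasure_ball omega_eq_unit_ball_vol powr_realpow')

lemma emeasure_lborel_cube:
  fixes c :: "real^'n"
  assumes "0 \<le> r"
  shows "emeasure lborel (cube c r) = ennreal (r ^ CARD('n))"
proof -
  have "emeasure lborel (cube c r) = emeasure lborel (interior (cube c r))"
    by (simp add: cube_cbox emeasure_lborel_cbox_eq emeasure_lborel_box_eq)
  then show ?thesis
    using assms by (simp add: interior_cube emeasure_lborel_box_cube)
qed

lemma cube_subset_ball:
  fixes c :: "real^'n"
  assumes "0 < s"
  shows "cube c s \<subseteq> ball c (2 * real CARD('n) * s)"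
proof
  fix x assume x: "x \<in> cube c s"
  have "dist c x \<le> (\<Sum>i\<in>UNIV. \<bar>(x - c)$i\<bar>)"
    by (metis dist_norm norm_minus_commute norm_le_l1_cart)
  also have "\<dots> \<le> (\<Sum>i\<in>(UNIV::'n set). s)"
  proof (intro sum_mono)
    fix i
    have "c$i \<le> x$i" "x$i \<le> c$i + s"
      using x by (auto simp: cube_def)
    then show "\<bar>(x - c)$i\<bar> \<le> s"
      by simp
  qed
  also have "\<dots> < 2 * real CARD('n) * s"
    using assms by simp
  finally show "x \<in> ball c (2 * real CARD('n) * s)"
    by simp
qed

lemma hcontent_le_emeasure_cubes:
  fixes c :: "nat \<Rightarrow> real^'n" and s :: "nat \<Rightarrow> real"
  assumes s: "\<And>i. i \<in> I \<Longrightarrow> 0 < s i"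
    and disj: "disjoint_family_on (\<lambda>i. interior (cube (c i) (s i))) I"
  shows "hcontent (real CARD('n)) (\<Union>i\<in>I. cube (c i) (s i)) \<le>
    ennreal (omega (real CARD('n)) * (2 * real CARD('n)) ^ CARD('n)) *
      emeasure lborel (\<Union>i\<in>I. interior (cube (c i) (s i)))"
proof -
  define d where "d = CARD('n)"
  define Kc where "Kc = omega (real d) * (2 * real d) ^ d"
  have Kc: "0 < Kc"
    unfolding Kc_def d_def by (intro mult_pos_pos omega_pos) auto
  define r where "r i = (if i \<in> I then 2 * real d * s i else 0)" for i
  define B where "B i = (if i \<in> I then interior (cube (c i) (s i)) else {})" for i
  have r: "0 \<le> r i" for i
    using s by (simp add: r_def less_imp_le)
  have cover: "(\<Union>i\<in>I. cube (c i) (s i)) \<subseteq> (\<Union>i. ball (c i) (r i))"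
  proof (intro UN_least)
    fix i assume i: "i \<in> I"
    have "cube (c i) (s i) \<subseteq> ball (c i) (r i)"
      using cube_subset_ball[OF s[OF i]] i by (simp add: r_def d_def)
    then show "cube (c i) (s i) \<subseteq> (\<Union>i. ball (c i) (r i))"
      by blast
  qed
  have summand: "ennreal (omega (real d) * r i powr real d) = ennreal Kc * emeasure lborel (B i)" for i
  proof (cases "i \<in> I")
    case True
    then have "omega (real d) * r i powr real d = Kc * s i ^ d"
      using s[OF True] by (simp add: r_def Kc_def d_def powr_realpow power_mult_distrib)
    then show ?thesis
      using True s[OF True] Kc
      by (simp add: B_def interior_cube emeasure_lborel_box_cube d_def ennreal_mult)
  qed (simp add: r_def B_def d_def)
  have "hcontent (real d) (\<Union>i\<in>I. cube (c i) (s i)) \<le> (\<Sum>i. ennreal (omega (real d) * r i powr real d))"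
    by (rule hcontent_le_cover[OF r cover])
  also have "\<dots> = ennreal Kc * (\<Sum>i. emeasure lborel (B i))"
    by (simp add: summand ennreal_suminf_cmult)
  also have "(\<Sum>i. emeasure lborel (B i)) = emeasure lborel (\<Union>i. B i)"
    using disj by (intro suminf_emeasure) (auto simp: B_def disjoint_family_on_def)
  also have "(\<Union>i. B i) = (\<Union>i\<in>I. interior (cube (c i) (s i)))"
    unfolding B_def by (auto split: if_splits)
  finally show ?thesis
    unfolding Kc_def d_def .
qed

lemma hcontent_le_emeasure_Union_cubes:
  fixes D :: "(real^'n) set set"
  assumes D: "countable D" and cubes: "\<And>K. K \<in> D \<Longrightarrow> \<exists>c s. 0 < s \<and> K = cube c s"
    and disj: "pairwise (\<lambda>A B. interior A \<inter> interior B = {}) D"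
  shows "hcontent (real CARD('n)) (\<Union>D) \<le>
    ennreal (omega (real CARD('n)) * (2 * real CARD('n)) ^ CARD('n)) * emeasure lebesgue (\<Union>D)"
proof -
  obtain c s where cs: "\<And>K. K \<in> D \<Longrightarrow> 0 < s K \<and> K = cube (c K) (s K)"
    using cubes by metis
  have "K \<in> sets lebesgue" if "K \<in> D" for K
  proof -
    have "cube (c K) (s K) \<in> sets lebesgue"
      by (simp add: cube_cbox)
    then show ?thesis
      using cs[OF that] by simp
  qed
  then have "\<Union>D \<in> sets lebesgue"
    using D by (intro sets.countable_Union) auto
  \<comment> \<open>An injective enumeration of \<open>D\<close>: distinct indices carry cubes with disjoint interiors.\<close>
  define I where "I = to_nat_on D ` D"
  define K where "K i = from_nat_into D i" for i
  have K: "K i \<in> D" if "i \<in> I" for i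
    using that D by (auto simp: I_def K_def)
  have D_eq: "\<Union>D = (\<Union>i\<in>I. cube (c (K i)) (s (K i)))"
    using D cs by (auto simp: I_def K_def)
  have disj_I: "disjoint_family_on (\<lambda>i. interior (cube (c (K i)) (s (K i)))) I"
    unfolding disjoint_family_on_def
  proof (intro ballI impI)
    fix i j assume "i \<in> I" "j \<in> I" "i \<noteq> j"
    moreover from this have "K i \<noteq> K j"
      using D by (auto simp: I_def K_def)
    ultimately show "interior (cube (c (K i)) (s (K i))) \<inter> interior (cube (c (K j)) (s (K j))) = {}"
      using disj K cs unfolding pairwise_def by metis
  qed
  define U where "U = (\<Union>i\<in>I. interior (cube (c (K i)) (s (K i))))"
  have "hcontent (real CARD('n)) (\<Union>D) \<le>
      ennreal (omega (real CARD('n)) * (2 * real CARD('n)) ^ CARD('n)) * emeasure lborel U"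
    unfolding D_eq U_def using cs K by (intro hcontent_le_emeasure_cubes disj_I) auto
  also have "emeasure lborel U = emeasure lebesgue U"
    by (simp add: U_def interior_cube)
  also have "\<dots> \<le> emeasure lebesgue (\<Union>D)"
    using \<open>\<Union>D \<in> sets lebesgue\<close> interior_subset
    by (intro emeasure_mono) (auto simp: U_def D_eq simp del: interior_cube)
  finally show ?thesis
    by (simp add: mult_left_mono)
qed

lemma bounded_subset_cube:
  fixes E :: "(real^'n) set"
  assumes "bounded E"
  obtains c l where "0 < l" "E \<subseteq> cube c l"
proof -
  obtain R where "0 < R" and R: "\<And>x. x \<in> E \<Longrightarrow> norm x \<le> R"
    using assms bounded_pos by blast
  have "E \<subseteq> cube (\<chi> i. - R) (2 * R)"
  proof
    fix x assume "x \<in> E"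
    then have "\<bar>x$i\<bar> \<le> R" for i
      using R component_le_norm_cart order_trans by blast
    then show "x \<in> cube (\<chi> i. - R) (2 * R)"
      unfolding cube_def by (simp add: abs_le_iff) (meson minus_le_iff)
  qed
  then show thesis
    using \<open>0 < R\<close> by (intro that[of "2 * R"]) auto
qed

lemma measurable_outer_cubes:
  fixes E :: "(real^'n) set"
  assumes E: "E \<in> lmeasurable" "E \<subseteq> cube a l" and l: "0 < l" and e: "0 < e"
  obtains D where "countable D" "\<And>K. K \<in> D \<Longrightarrow> \<exists>c s. 0 < s \<and> K = cube c s"
    "pairwise (\<lambda>A B. interior A \<inter> interior B = {}) D"
    "E \<subseteq> \<Union>D" "\<Union>D \<in> lmeasurable" "measure lebesgue (\<Union>D) \<le> measure lebesgue E + e"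
proof -
  have E_cbox: "E \<subseteq> cbox a (\<chi> i. a$i + l)"
    using E(2) by (simp add: cube_cbox)
  obtain D where D: "countable D" "\<And>K. K \<in> D \<Longrightarrow> K \<subseteq> cbox a (\<chi> i. a$i + l) \<and> K \<noteq> {} \<and> (\<exists>c d. K = cbox c d)"
      "pairwise (\<lambda>A B. interior A \<inter> interior B = {}) D"
      "\<And>u v. cbox u v \<in> D \<Longrightarrow> \<exists>n. \<forall>i \<in> Basis. v \<bullet> i - u \<bullet> i = ((\<chi> i. a$i + l) \<bullet> i - a \<bullet> i) / 2^n"
      "\<And>K. \<lbrakk>K \<in> D; box a (\<chi> i. a$i + l) \<noteq> {}\<rbrakk> \<Longrightarrow> interior K \<noteq> {}"
      "E \<subseteq> \<Union>D" "\<Union>D \<in> lmeasurable" "measure lebesgue (\<Union>D) \<le> measure lebesgue E + e"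
    by (rule measurable_outer_intervals_bounded[OF E(1) E_cbox e]) (rule that)
  have cubes: "\<exists>c s. 0 < s \<and> K = cube c s" if K: "K \<in> D" for K
  proof -
    obtain u v where uv: "K = cbox u v"
      using D(2) K by blast
    then obtain n where n: "\<forall>i \<in> Basis. v \<bullet> i - u \<bullet> i = ((\<chi> i. a$i + l) \<bullet> i - a \<bullet> i) / 2^n"
      using D(4) K by blast
    have "v$i = u$i + l / 2^n" for i
    proof -
      have "axis i 1 \<in> (Basis :: (real^'n) set)"
        by (auto simp: Basis_vec_def)
      from n[rule_format, OF this] show ?thesis
        by (simp add: inner_axis)
    qed
    then have "v = (\<chi> i. u$i + l / 2^n)"
      by (simp add: vec_eq_iff)
    then show ?thesis
      using l by (intro exI[of _ u] exI[of _ "l / 2^n"]) (simp add: uv cube_cbox)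
  qed
  show thesis
    using D(1) cubes D(3,6-8) by (rule that)
qed

lemma hcontent_le_lebesgue:
  fixes E :: "(real^'n) set"
  assumes E: "E \<in> sets lebesgue" "bounded E"
  shows "hcontent (real CARD('n)) E \<le>
    ennreal (omega (real CARD('n)) * (2 * real CARD('n)) ^ CARD('n)) * emeasure lebesgue E"
proof -
  define Kc where "Kc = omega (real CARD('n)) * (2 * real CARD('n)) ^ CARD('n)"
  have Kc: "0 < Kc"
    unfolding Kc_def by (intro mult_pos_pos omega_pos) auto
  obtain a l where l: "0 < l" and E_cube: "E \<subseteq> cube a l"
    using bounded_subset_cube[OF E(2)] by metis
  have E_lmeasurable: "E \<in> lmeasurable"
    using E_cube by (intro fmeasurableI2[OF lmeasurable_cbox _ E(1)]) (simp add: cube_cbox)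
  have "hcontent (real CARD('n)) E \<le> ennreal Kc * emeasure lebesgue E + ennreal e" if e: "0 < e" for e
  proof -
    have eKc: "0 < e / Kc"
      using e Kc by simp
    obtain D where D: "countable D" "\<And>K. K \<in> D \<Longrightarrow> \<exists>c s. 0 < s \<and> K = cube c s"
        "pairwise (\<lambda>A B. interior A \<inter> interior B = {}) D"
        "E \<subseteq> \<Union>D" "\<Union>D \<in> lmeasurable" "measure lebesgue (\<Union>D) \<le> measure lebesgue E + e / Kc"
      by (rule measurable_outer_cubes[OF E_lmeasurable E_cube l eKc]) (rule that)
    have "hcontent (real CARD('n)) E \<le> hcontent (real CARD('n)) (\<Union>D)"
      by (rule hcontent_mono[OF D(4)])
    also have "\<dots> \<le> ennreal Kc * emeasure lebesgue (\<Union>D)"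
      unfolding Kc_def using D(1-3) by (rule hcontent_le_emeasure_Union_cubes)
    also have "emeasure lebesgue (\<Union>D) \<le> ennreal (measure lebesgue E + e / Kc)"
      using D(5,6) by (simp add: emeasure_eq_measure2 ennreal_leI)
    also have "ennreal Kc * ennreal (measure lebesgue E + e / Kc) = ennreal Kc * emeasure lebesgue E + ennreal e"
      using Kc e E_lmeasurable
      by (simp add: emeasure_eq_measure2 distrib_left ennreal_mult[symmetric] ennreal_plus[symmetric]
          del: ennreal_plus)
    finally show ?thesis
      by (simp add: mult_left_mono)
  qed
  then show ?thesis
    unfolding Kc_def by (rule ennreal_le_epsilon)
qed

lemma choquet_le_nn_integral:
  fixes f :: "real^'n \<Rightarrow> real"
  assumes A: "A \<in> sets lebesgue" "bounded A"
    and f: "f \<in> borel_measurable lebesgue" and nn: "\<And>x. 0 \<le> f x"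
  shows "choquet (real CARD('n)) A f \<le>
    ennreal (omega (real CARD('n)) * (2 * real CARD('n)) ^ CARD('n)) *
      (\<integral>\<^sup>+x. indicator A x * ennreal (f x) \<partial>lebesgue)"
proof -
  define Kc where "Kc = omega (real CARD('n)) * (2 * real CARD('n)) ^ CARD('n)"
  have levels: "{x \<in> A. t < f x} \<in> sets lebesgue" for t
  proof -
    have "{x \<in> A. t < f x} = A \<inter> {x \<in> space lebesgue. t < f x}"
      by auto
    also have "\<dots> \<in> sets lebesgue"
      using A(1) f by measurable
    finally show ?thesis .
  qed
  have "choquet (real CARD('n)) A f \<le>
      set_nn_integral lborel {0<..} (\<lambda>t. ennreal Kc * emeasure lebesgue {x \<in> A. f x > t})"
    unfolding choquet_def Kc_def
  proof (intro nn_integral_mono mult_right_mono)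
    fix t
    show "hcontent (real CARD('n)) {x \<in> A. f x > t} \<le>
        ennreal (omega (real CARD('n)) * (2 * real CARD('n)) ^ CARD('n)) * emeasure lebesgue {x \<in> A. f x > t}"
      using levels bounded_subset[OF A(2)] by (intro hcontent_le_lebesgue) auto
  qed auto
  also have "\<dots> = ennreal Kc * set_nn_integral lborel {0<..} (\<lambda>t. emeasure lebesgue {x \<in> A. f x > t})"
  proof -
    have "(\<lambda>t. emeasure lebesgue {x \<in> A. t < f x}) \<in> borel_measurable borel"
      using levels by (intro borel_measurable_antimono antimonoI emeasure_mono) auto
    then show ?thesis
      by (simp add: nn_integral_cmult[symmetric] mult.assoc)
  qed
  also have "set_nn_integral lborel {0<..} (\<lambda>t. emeasure lebesgue {x \<in> A. f x > t}) =
      (\<integral>\<^sup>+x. indicator A x * ennreal (f x) \<partial>lebesgue)"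
    using A f nn bounded_set_imp_lmeasurable[OF A(2,1)]
    by (intro nn_integral_layer_cake[symmetric]) (auto simp: fmeasurable_def)
  finally show ?thesis
    unfolding Kc_def .
qed

section \<open>Quasicontinuity\<close>

lemma borel_measurable_continuous_outside_Inter:
  fixes u :: "'a::metric_space \<Rightarrow> real" and U :: "nat \<Rightarrow> 'a set"
  assumes A: "closed A" and U: "\<And>n. open (U n)" and cont: "\<And>n. continuous_on (A - U n) u"
  shows "(\<lambda>x. indicator (A - (\<Inter>n. U n)) x * u x) \<in> borel_measurable borel"
proof (rule borel_measurable_LIMSEQ_metric)
  define F where "F n = (\<Union>m\<le>n. A - U m)" for n
  have "closed (F n)" for n
    unfolding F_def using A U by (intro closed_UN closed_Diff) auto
  moreover have "continuous_on (F n) u" for n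
    unfolding F_def using A U cont by (intro continuous_on_closed_Union closed_Diff) auto
  ultimately show "(\<lambda>x. indicator (F n) x *\<^sub>R u x) \<in> borel_measurable borel" for n
    by (intro borel_measurable_continuous_on_indicator borel_closed)
  show "(\<lambda>n. indicator (F n) x *\<^sub>R u x) \<longlonglongrightarrow> indicator (A - (\<Inter>n. U n)) x * u x" for x
  proof (cases "x \<in> A - (\<Inter>n. U n)")
    case True
    then obtain m where m: "x \<in> A - U m"
      by auto
    have "\<forall>\<^sub>F n in sequentially. indicator (F n) x *\<^sub>R u x = indicator (A - (\<Inter>n. U n)) x * u x"
      using eventually_ge_at_top[of m]
    proof eventually_elim
      case (elim n)
      then have "x \<in> F n"
        using m by (auto simp: F_def)
      then show ?case
        using True by simp
    qed
    then show ?thesis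
      by (rule tendsto_eventually)
  next
    case False
    then have "x \<notin> F n" for n
      by (auto simp: F_def)
    then show ?thesis
      using False by simp
  qed
qed

lemma measurable_completion_quasicontinuous:
  fixes N :: "'a::metric_space measure" and u :: "'a \<Rightarrow> real"
  assumes N: "sets N = sets borel" and K: "0 < K"
    and growth: "\<And>x r. 0 \<le> r \<Longrightarrow> emeasure N (ball x r) \<le> ennreal K * ennreal (omega \<beta> * r powr \<beta>)"
    and qc: "hc_quasicontinuous_on \<beta> Q u" and A: "closed A" "A \<subseteq> Q"
  shows "(\<lambda>x. indicator A x * u x) \<in> borel_measurable (completion N)"
proof -
  have "\<forall>n::nat. \<exists>U. open U \<and> hcontent \<beta> U < ennreal (1 / Suc n) \<and> continuous_on (Q - U) u"
    using qc unfolding hc_quasicontinuous_on_def by simp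
  then obtain U where U: "\<And>n. open (U n)" "\<And>n. hcontent \<beta> (U n) < ennreal (1 / Suc n)"
      "\<And>n. continuous_on (Q - U n) u"
    by metis
  \<comment> \<open>Off \<open>B\<close>, \<open>u\<close> is continuous on some \<open>A - U n\<close>; and \<open>B\<close> has zero content, so it is \<open>N\<close>-null.\<close>
  define B where "B = (\<Inter>n. U n)"
  have B_borel: "B \<in> sets borel"
    unfolding B_def using U(1) by (intro sets.countable_INT) auto
  have "hcontent \<beta> B \<le> ennreal e" if "0 < e" for e
  proof -
    obtain n where n: "1 / Suc n < e"
      using \<open>0 < e\<close> by (metis inverse_eq_divide reals_Archimedean)
    have "hcontent \<beta> B \<le> hcontent \<beta> (U n)"
      unfolding B_def by (intro hcontent_mono) auto
    also have "\<dots> \<le> ennreal e"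
      using U(2)[of n] n by (metis ennreal_leI less_imp_le order.trans)
    finally show ?thesis .
  qed
  then have "hcontent \<beta> B = 0"
    by (metis ennreal_le_epsilon add_0 le_zero_eq)
  moreover have "emeasure N B \<le> ennreal K * hcontent \<beta> B"
    using B_borel N K growth by (intro emeasure_le_hcontent) auto
  ultimately have "B \<in> null_sets N"
    using B_borel N by auto
  then have ae: "AE x in completion N. indicator (A - B) x * u x = indicator A x * u x"
    by (intro AE_completion) (auto elim!: AE_I' simp: indicator_def)
  have "(\<lambda>x. indicator (A - B) x * u x) \<in> borel_measurable borel"
    unfolding B_def using A U(1)
    by (intro borel_measurable_continuous_outside_Inter continuous_on_subset[OF U(3)]) auto
  then have "(\<lambda>x. indicator (A - B) x * u x) \<in> borel_measurable (completion N)"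
    by (intro measurable_completion) (simp add: measurable_cong_sets[OF N refl])
  then show ?thesis
    using ae by (rule completion.measurable_AE_cong) simp
qed

lemma small_oscillation_outside_small_open:
  fixes g :: "nat \<Rightarrow> 'a::euclidean_space \<Rightarrow> real"
  assumes g: "\<And>n. continuous_on UNIV (g n)" and N: "N \<in> null_sets lebesgue"
    and conv: "\<And>x. x \<notin> N \<Longrightarrow> convergent (\<lambda>n. g n x)"
    and V: "open V" "bounded V" and e: "0 < e" and \<delta>: "0 < \<delta>"
  obtains n U where "open U" "U \<subseteq> V" "emeasure lebesgue U < ennreal \<delta>"
    "\<And>x p q. x \<in> V - U \<Longrightarrow> n \<le> p \<Longrightarrow> n \<le> q \<Longrightarrow> \<bar>g p x - g q x\<bar> \<le> e"
proof -
  define W where "W n = V \<inter> (\<Union>p\<in>{n..}. \<Union>q\<in>{n..}. {x. e < \<bar>g p x - g q x\<bar>})" for n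
  have W_open: "open (W n)" for n
    unfolding W_def using V(1) g by (intro open_Int open_UN ballI open_Collect_less continuous_intros)
  then have W_sets: "range W \<subseteq> sets lebesgue"
    by auto
  have W_finite: "emeasure lebesgue (W n) \<noteq> \<infinity>" for n
  proof -
    have "emeasure lebesgue (W n) \<le> emeasure lebesgue V"
      using V(1) by (intro emeasure_mono) (auto simp: W_def)
    then show ?thesis
      using lmeasurable_open[OF V(2,1)] by (auto simp: fmeasurable_def top_unique)
  qed
  have "decseq W"
    unfolding decseq_def W_def by (intro allI impI Int_mono order_refl UN_mono) auto
  have "(\<Inter>n. W n) \<subseteq> N"
  proof
    fix x assume x: "x \<in> (\<Inter>n. W n)"
    show "x \<in> N"
    proof (rule ccontr)
      assume "x \<notin> N"
      then have "Cauchy (\<lambda>n. g n x)"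
        using conv convergent_Cauchy by blast
      then obtain M where M: "\<And>p q. M \<le> p \<Longrightarrow> M \<le> q \<Longrightarrow> dist (g p x) (g q x) < e"
        using e unfolding Cauchy_def by blast
      from x have "x \<in> W M"
        by blast
      then obtain p q where "M \<le> p" "M \<le> q" "e < \<bar>g p x - g q x\<bar>"
        by (auto simp: W_def)
      then show False
        using M[of p q] by (simp add: dist_real_def)
    qed
  qed
  moreover have "(\<Inter>n. W n) \<in> sets lebesgue"
    using W_sets by (intro sets.countable_INT) auto
  ultimately have "emeasure lebesgue (\<Inter>n. W n) = 0"
    using N by (metis null_sets_subset null_setsD1)
  then have "(\<lambda>n. emeasure lebesgue (W n)) \<longlonglongrightarrow> 0"
    using Lim_emeasure_decseq[OF W_sets \<open>decseq W\<close> W_finite] by simp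
  then obtain n where "emeasure lebesgue (W n) < ennreal \<delta>"
    using \<delta> by (metis ennreal_less_zero_iff eventually_sequentially order_refl order_tendstoD(2))
  moreover have "\<bar>g p x - g q x\<bar> \<le> e" if "x \<in> V - W n" "n \<le> p" "n \<le> q" for x p q
    using that by (auto simp: W_def not_less)
  ultimately show thesis
    using W_open by (intro that[of "W n" n]) (auto simp: W_def)
qed

lemma egorov_open:
  fixes g :: "nat \<Rightarrow> 'a::euclidean_space \<Rightarrow> real"
  assumes g: "\<And>n. continuous_on UNIV (g n)" and N: "N \<in> null_sets lebesgue"
    and conv: "\<And>x. x \<notin> N \<Longrightarrow> convergent (\<lambda>n. g n x)"
    and V: "open V" "bounded V" and \<delta>: "0 < \<delta>"
  obtains U where "open U" "U \<subseteq> V" "emeasure lebesgue U < ennreal \<delta>" "uniformly_Cauchy_on (V - U) g"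
proof -
  have "\<exists>n W. open W \<and> W \<subseteq> V \<and> emeasure lebesgue W < ennreal (\<delta> / 4 * (1 / 2) ^ m) \<and>
      (\<forall>x\<in>V - W. \<forall>p\<ge>n. \<forall>q\<ge>n. \<bar>g p x - g q x\<bar> \<le> 1 / Suc m)" for m
  proof -
    have e: "0 < 1 / real (Suc m)" and \<delta>_m: "0 < \<delta> / 4 * (1 / 2) ^ m"
      using \<delta> by auto
    obtain k W where "open W" "W \<subseteq> V" "emeasure lebesgue W < ennreal (\<delta> / 4 * (1 / 2) ^ m)"
      "\<And>x p q. x \<in> V - W \<Longrightarrow> k \<le> p \<Longrightarrow> k \<le> q \<Longrightarrow> \<bar>g p x - g q x\<bar> \<le> 1 / real (Suc m)"
      by (rule small_oscillation_outside_small_open[OF g N conv V e \<delta>_m], assumption, rule that)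
    then show ?thesis
      by blast
  qed
  then obtain n W where W: "\<And>m. open (W m)" "\<And>m. W m \<subseteq> V"
      "\<And>m. emeasure lebesgue (W m) < ennreal (\<delta> / 4 * (1 / 2) ^ m)"
      "\<And>m x p q. x \<in> V - W m \<Longrightarrow> n m \<le> p \<Longrightarrow> n m \<le> q \<Longrightarrow> \<bar>g p x - g q x\<bar> \<le> 1 / Suc m"
    by metis
  define U where "U = (\<Union>m. W m)"
  have "emeasure lebesgue U \<le> (\<Sum>m. emeasure lebesgue (W m))"
    unfolding U_def using W(1) by (intro emeasure_subadditive_countably) auto
  also have "\<dots> \<le> (\<Sum>m. ennreal (\<delta> / 4 * (1 / 2) ^ m))"
    by (intro suminf_le less_imp_le W(3)) auto
  also have "\<dots> = ennreal (\<Sum>m. \<delta> / 4 * (1 / 2) ^ m)"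
    using \<delta> by (intro suminf_ennreal2) (auto intro!: summable_mult summable_geometric)
  also have "(\<Sum>m. \<delta> / 4 * (1 / 2::real) ^ m) = \<delta> / 2"
    by (subst suminf_mult) (auto simp: suminf_geometric summable_geometric)
  also have "ennreal (\<delta> / 2) < ennreal \<delta>"
    using \<delta> by (simp add: ennreal_less_iff)
  finally have U_small: "emeasure lebesgue U < ennreal \<delta>" .
  have Cauchy: "uniformly_Cauchy_on (V - U) g"
    unfolding uniformly_Cauchy_on_def
  proof (intro allI impI)
    fix e :: real assume "0 < e"
    then obtain m where m: "1 / Suc m < e"
      by (metis inverse_eq_divide reals_Archimedean)
    have "dist (g p x) (g q x) < e" if "x \<in> V - U" "n m \<le> p" "n m \<le> q" for x p q
      using W(4)[of x m p q] that m by (simp add: U_def dist_real_def)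
    then show "\<exists>M. \<forall>x\<in>V - U. \<forall>p\<ge>M. \<forall>q\<ge>M. dist (g p x) (g q x) < e"
      by blast
  qed
  have "open U" "U \<subseteq> V"
    using W(1,2) by (auto simp: U_def)
  then show thesis
    using U_small Cauchy by (rule that)
qed

lemma continuous_on_limit_uniformly_Cauchy:
  fixes g :: "nat \<Rightarrow> 'a::topological_space \<Rightarrow> 'b::{metric_space, complete_space}"
  assumes g: "\<And>n. continuous_on X (g n)" and Cauchy: "uniformly_Cauchy_on X g"
    and lim: "\<And>x. x \<in> X \<Longrightarrow> (\<lambda>n. g n x) \<longlonglongrightarrow> F x"
  shows "continuous_on X F"
proof -
  obtain l where l: "uniform_limit X g l sequentially"
    using Cauchy_uniformly_convergent[OF Cauchy] uniformly_convergent_on_def by blast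
  have "continuous_on X l"
    by (rule uniform_limit_theorem[OF _ l]) (simp_all add: g)
  moreover have "l x = F x" if "x \<in> X" for x
    using that l lim by (metis LIMSEQ_unique tendsto_uniform_limitI)
  ultimately show ?thesis
    using continuous_on_cong by blast
qed

lemma lusin:
  fixes F :: "'a::euclidean_space \<Rightarrow> real"
  assumes F: "F \<in> borel_measurable lebesgue" and V: "open V" "bounded V" and \<eta>: "0 < \<eta>"
  obtains U where "open U" "U \<subseteq> V" "emeasure lebesgue U < ennreal \<eta>" "continuous_on (V - U) F"
proof -
  have "F measurable_on UNIV"
    using lebesgue_measurable_imp_measurable_on_real[OF F] by simp
  then obtain N g where N: "negligible N" and g: "\<And>n. continuous_on UNIV (g n)"
    and lim: "\<And>x. x \<notin> N \<Longrightarrow> (\<lambda>n. g n x) \<longlonglongrightarrow> F x"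
    unfolding measurable_on_def by auto
  have N_null: "N \<in> null_sets lebesgue"
    using N by (simp add: negligible_iff_null_sets)
  have \<eta>4: "0 < \<eta> / 4"
    using \<eta> by simp
  obtain G where G: "open G" "N \<subseteq> G" "emeasure lebesgue (G - N) < ennreal (\<eta> / 4)"
    by (rule sets_lebesgue_outer_open[OF null_setsD2[OF N_null] \<eta>4])
  have "emeasure lebesgue (G \<inter> V) \<le> emeasure lebesgue G"
    using G(1) by (intro emeasure_mono) auto
  also have "\<dots> = emeasure lebesgue (G - N)"
    using G(1) N_null by (simp add: emeasure_Diff_null_set)
  finally have G_small: "emeasure lebesgue (G \<inter> V) \<le> ennreal (\<eta> / 4)"
    using G(3) by simp
  have conv: "convergent (\<lambda>n. g n x)" if "x \<notin> N" for x
    using lim[OF that] by (rule convergentI)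
  obtain W where W: "open W" "W \<subseteq> V" "emeasure lebesgue W < ennreal (\<eta> / 4)"
    and Cauchy: "uniformly_Cauchy_on (V - W) g"
    by (rule egorov_open[OF g N_null conv V \<eta>4], assumption, rule that)
  define U where "U = (G \<inter> V) \<union> W"
  have "emeasure lebesgue U \<le> emeasure lebesgue (G \<inter> V) + emeasure lebesgue W"
    unfolding U_def using G(1) V(1) W(1) by (intro emeasure_subadditive) auto
  also have "\<dots> \<le> ennreal (\<eta> / 4) + ennreal (\<eta> / 4)"
    using W(3) by (intro add_mono G_small) auto
  also have "\<dots> < ennreal \<eta>"
    using \<eta> by (simp add: ennreal_plus[symmetric] ennreal_less_iff del: ennreal_plus)
  finally have U_small: "emeasure lebesgue U < ennreal \<eta>" .
  have continuous: "continuous_on (V - U) F"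
  proof (rule continuous_on_limit_uniformly_Cauchy)
    show "continuous_on (V - U) (g n)" for n
      using g by (rule continuous_on_subset) simp
    show "uniformly_Cauchy_on (V - U) g"
      using Cauchy unfolding uniformly_Cauchy_on_def U_def by blast
    show "(\<lambda>n. g n x) \<longlonglongrightarrow> F x" if "x \<in> V - U" for x
      using that G(2) by (intro lim) (auto simp: U_def)
  qed
  have "open U" "U \<subseteq> V"
    using G(1) V(1) W(1,2) by (auto simp: U_def)
  then show thesis
    using U_small continuous by (rule that)
qed

lemma hc_quasicontinuous_on_lebesgue_measurable:
  fixes F :: "real^'n \<Rightarrow> real"
  assumes F: "F \<in> borel_measurable lebesgue" and Q: "bounded Q"
  shows "hc_quasicontinuous_on (real CARD('n)) Q F"
  unfolding hc_quasicontinuous_on_def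
proof (intro allI impI)
  fix \<epsilon> :: real assume \<epsilon>: "0 < \<epsilon>"
  define Kc where "Kc = omega (real CARD('n)) * (2 * real CARD('n)) ^ CARD('n)"
  have Kc: "0 < Kc"
    unfolding Kc_def by (intro mult_pos_pos omega_pos) auto
  obtain R where R: "Q \<subseteq> ball 0 R"
    using bounded_subset_ballD[OF Q] by blast
  have "0 < \<epsilon> / (2 * Kc)"
    using \<epsilon> Kc by simp
  then obtain U where U: "open U" "U \<subseteq> ball 0 R" "emeasure lebesgue U < ennreal (\<epsilon> / (2 * Kc))"
      "continuous_on (ball 0 R - U) F"
    by (rule lusin[OF F open_ball bounded_ball])
  have "hcontent (real CARD('n)) U \<le> ennreal Kc * emeasure lebesgue U"
    unfolding Kc_def using U(1,2) by (intro hcontent_le_lebesgue) (auto intro: bounded_subset)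
  also have "\<dots> \<le> ennreal Kc * ennreal (\<epsilon> / (2 * Kc))"
    using U(3) by (intro mult_left_mono) auto
  also have "\<dots> < ennreal \<epsilon>"
    using Kc \<epsilon> by (simp add: ennreal_mult[symmetric] ennreal_less_iff)
  finally have "hcontent (real CARD('n)) U < ennreal \<epsilon>" .
  moreover have "continuous_on (Q - U) F"
    using R by (intro continuous_on_subset[OF U(4)]) auto
  ultimately show "\<exists>U. open U \<and> hcontent (real CARD('n)) U < ennreal \<epsilon> \<and> continuous_on (Q - U) F"
    using U(1) by blast
qed

lemma hc_quasicontinuous_on_cong:
  "(\<And>x. x \<in> A \<Longrightarrow> f x = g x) \<Longrightarrow> hc_quasicontinuous_on \<beta> A f \<Longrightarrow> hc_quasicontinuous_on \<beta> A g"
  unfolding hc_quasicontinuous_on_def by (metis (no_types, lifting) DiffD1 continuous_on_cong)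

section \<open>Axis-parallel planes\<close>

lemma plane_cube_cbox:
  "0 \<le> r \<Longrightarrow> plane_cube S c r = cbox c (\<chi> i. if i \<in> S then c$i + r else c$i)"
  unfolding plane_cube_def by (auto simp: mem_box_cart) (metis order_antisym)+

definition plane_embedding :: "'n set \<Rightarrow> real^'n \<Rightarrow> ('n \<Rightarrow> real) \<Rightarrow> real^'n" where
  "plane_embedding S a y = (\<chi> i. if i \<in> S then y i else a$i)"

lemma plane_measure_eq_completion:
  "plane_measure S a = completion (distr (Pi\<^sub>M S (\<lambda>_. lborel)) borel (plane_embedding S a))"
  unfolding plane_measure_def plane_embedding_def ..

lemma measurable_plane_embedding:
  fixes S :: "'n::finite set" and a :: "real^'n"
  shows "plane_embedding S a \<in> borel_measurable (Pi\<^sub>M S (\<lambda>_. lborel))"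
proof (subst borel_measurable_euclidean_space, intro ballI)
  fix b :: "real^'n" assume "b \<in> Basis"
  then obtain j where b: "b = axis j 1"
    by (auto simp: Basis_vec_def)
  show "(\<lambda>y. plane_embedding S a y \<bullet> b) \<in> borel_measurable (Pi\<^sub>M S (\<lambda>_. lborel))"
  proof (cases "j \<in> S")
    case True
    then show ?thesis
      using measurable_component_singleton[OF True, of "\<lambda>_. lborel"]
      by (simp add: b plane_embedding_def inner_axis)
  qed (simp add: b plane_embedding_def inner_axis)
qed

lemma emeasure_PiM_lborel_Icc:
  assumes "\<And>i. i \<in> S \<Longrightarrow> l i \<le> u i" "finite S"
  shows "emeasure (Pi\<^sub>M S (\<lambda>_. lborel)) (Pi\<^sub>E S (\<lambda>i. {l i..u i})) = ennreal (\<Prod>i\<in>S. u i - l i)"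
proof -
  interpret product_sigma_finite "\<lambda>_. lborel :: real measure"
    by standard
  have "emeasure (Pi\<^sub>M S (\<lambda>_. lborel)) (Pi\<^sub>E S (\<lambda>i. {l i..u i})) = (\<Prod>i\<in>S. ennreal (u i - l i))"
    using assms by (subst emeasure_PiM) auto
  also have "\<dots> = ennreal (\<Prod>i\<in>S. u i - l i)"
    using assms by (intro prod_ennreal) auto
  finally show ?thesis .
qed

lemma emeasure_plane_ball_le:
  fixes x a :: "real^'n"
  assumes "0 \<le> r"
  shows "emeasure (distr (Pi\<^sub>M S (\<lambda>_. lborel)) borel (plane_embedding S a)) (ball x r) \<le> ennreal ((2 * r) ^ card S)"
proof -
  have "plane_embedding S a -` ball x r \<inter> space (Pi\<^sub>M S (\<lambda>_. lborel)) \<subseteq> Pi\<^sub>E S (\<lambda>i. {x$i - r..x$i + r})"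
  proof
    fix y assume y: "y \<in> plane_embedding S a -` ball x r \<inter> space (Pi\<^sub>M S (\<lambda>_. lborel))"
    have "y i \<in> {x$i - r..x$i + r}" if "i \<in> S" for i
    proof -
      have "\<bar>(plane_embedding S a y - x) $ i\<bar> \<le> norm (plane_embedding S a y - x)"
        by (rule component_le_norm_cart)
      also have "\<dots> < r"
        using y by (simp add: dist_norm norm_minus_commute)
      finally have "\<bar>y i - x$i\<bar> < r"
        using that by (simp add: plane_embedding_def)
      then show ?thesis
        by (simp add: abs_less_iff)
    qed
    then show "y \<in> Pi\<^sub>E S (\<lambda>i. {x$i - r..x$i + r})"
      using y by (auto simp: space_PiM PiE_def extensional_def)
  qed
  then have "emeasure (distr (Pi\<^sub>M S (\<lambda>_. lborel)) borel (plane_embedding S a)) (ball x r)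
      \<le> emeasure (Pi\<^sub>M S (\<lambda>_. lborel)) (Pi\<^sub>E S (\<lambda>i. {x$i - r..x$i + r}))"
    by (subst emeasure_distr[OF measurable_plane_embedding])
      (auto intro!: emeasure_mono sets_PiM_I_finite)
  also have "\<dots> = ennreal ((2 * r) ^ card S)"
    using assms by (subst emeasure_PiM_lborel_Icc) auto
  finally show ?thesis .
qed

lemma emeasure_plane_cube:
  fixes c a :: "real^'n"
  assumes r: "0 \<le> r" and ca: "\<And>i. i \<notin> S \<Longrightarrow> c$i = a$i"
  shows "emeasure (distr (Pi\<^sub>M S (\<lambda>_. lborel)) borel (plane_embedding S a)) (plane_cube S c r) = ennreal (r ^ card S)"
proof -
  have "plane_embedding S a -` plane_cube S c r \<inter> space (Pi\<^sub>M S (\<lambda>_. lborel)) = Pi\<^sub>E S (\<lambda>i. {c$i..c$i + r})"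
    using ca by (auto simp: space_PiM plane_cube_def plane_embedding_def PiE_def Pi_def extensional_def)
  moreover have "plane_cube S c r \<in> sets borel"
    using r by (simp add: plane_cube_cbox)
  ultimately show ?thesis
    using r by (simp add: emeasure_distr[OF measurable_plane_embedding] emeasure_PiM_lborel_Icc)
qed

lemma plane_cube_subset_cube:
  fixes c a0 :: "real^'n"
  assumes S: "S \<noteq> {}" and r: "0 < r" and sub: "plane_cube S c r \<subseteq> cube a0 l0"
  obtains c' where "plane_cube S c r \<subseteq> cube c' r" "cube c' r \<subseteq> cube a0 l0"
proof
  define z where "z = (\<chi> j. if j \<in> S then c$j + r else c$j)"
  have "c \<in> plane_cube S c r" "z \<in> plane_cube S c r"
    using r unfolding plane_cube_def z_def by auto
  then have c: "a0$i \<le> c$i \<and> c$i \<le> a0$i + l0" and z: "a0$i \<le> z$i \<and> z$i \<le> a0$i + l0" for i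
    using sub unfolding cube_def by blast+
  obtain i0 where "i0 \<in> S"
    using S by auto
  then have "r \<le> l0"
    using c[of i0] z[of i0] unfolding z_def by auto
  define c' where "c' = (\<chi> j. if j \<in> S then c$j else min (c$j) (a0$j + l0 - r))"
  show "plane_cube S c r \<subseteq> cube c' r"
  proof
    fix x assume x: "x \<in> plane_cube S c r"
    have "c'$i \<le> x$i \<and> x$i \<le> c'$i + r" for i
      using x c[of i] r unfolding plane_cube_def c'_def by (cases "i \<in> S") (auto simp: min_def)
    then show "x \<in> cube c' r"
      unfolding cube_def by auto
  qed
  show "cube c' r \<subseteq> cube a0 l0"
  proof
    fix x assume x: "x \<in> cube c' r"
    have "a0$i \<le> x$i \<and> x$i \<le> a0$i + l0" for i
    proof -
      have x_i: "c'$i \<le> x$i" "x$i \<le> c'$i + r"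
        using x by (auto simp: cube_def)
      show ?thesis
      proof (cases "i \<in> S")
        case True
        then have "c'$i = c$i" "z$i = c$i + r"
          by (simp_all add: c'_def z_def)
        then show ?thesis
          using x_i c[of i] z[of i] by auto
      next
        case False
        then have "c'$i = min (c$i) (a0$i + l0 - r)"
          by (simp add: c'_def)
        then show ?thesis
          using x_i c[of i] \<open>r \<le> l0\<close> by (auto simp: min_def split: if_splits)
      qed
    qed
    then show "x \<in> cube a0 l0"
      by (simp add: cube_def)
  qed
qed

lemma plane_cubes_subset_cubes:
  fixes S :: "'n::finite set" and a a0 :: "real^'n"
  assumes S: "S \<noteq> {}" and Q_in: "Q \<in> plane_cubes S a (cube a0 l0)"
  shows "closed Q \<and> (\<exists>c r. 0 < r \<and> Q \<subseteq> cube c r \<and> cube c r \<subseteq> cube a0 l0 \<and>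
    emeasure (distr (Pi\<^sub>M S (\<lambda>_. lborel)) borel (plane_embedding S a)) Q = ennreal (r ^ card S))"
proof -
  obtain c r where Q: "Q = plane_cube S c r" "0 < r" "\<And>i. i \<notin> S \<Longrightarrow> c$i = a$i"
      "plane_cube S c r \<subseteq> cube a0 l0"
    using Q_in unfolding plane_cubes_def by blast
  obtain c' where "plane_cube S c r \<subseteq> cube c' r" "cube c' r \<subseteq> cube a0 l0"
    using plane_cube_subset_cube[OF S Q(2,4)] by metis
  moreover have "closed Q"
    using Q(1,2) by (simp add: plane_cube_cbox closed_cbox)
  moreover have "emeasure (distr (Pi\<^sub>M S (\<lambda>_. lborel)) borel (plane_embedding S a)) Q = ennreal (r ^ card S)"
    using Q(1-3) by (simp add: emeasure_plane_cube)
  ultimately show ?thesis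
    using Q(1,2) by blast
qed

section \<open>Mean oscillations and the BMO seminorms\<close>

lemma set_integrable_const_real:
  "A \<in> sets M \<Longrightarrow> emeasure M A < \<infinity> \<Longrightarrow> set_integrable M A (\<lambda>_. c :: real)"
  unfolding set_integrable_def by (intro integrable_scaleR_left integrable_real_indicator)

lemma set_integral_abs_diff_average_le:
  fixes u :: "'a \<Rightarrow> real"
  assumes u: "set_integrable M Q u" and Q: "Q \<in> sets M" "emeasure M Q < \<infinity>"
  shows "(LINT x:Q|M. \<bar>u x - (LINT y:Q|M. u y) / measure M Q\<bar>) \<le> 2 * (LINT x:Q|M. \<bar>u x - c\<bar>)"
proof -
  define \<mu> where "\<mu> = measure M Q"
  define m where "m = (LINT y:Q|M. u y) / \<mu>"
  have const: "set_integrable M Q (\<lambda>_. k)" for k :: real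
    using Q by (rule set_integrable_const_real)
  have integral_const: "(LINT x:Q|M. k) = \<mu> * k" for k :: real
    unfolding \<mu>_def using Q by (simp add: set_integral_const)
  have int_c: "set_integrable M Q (\<lambda>x. \<bar>u x - c\<bar>)"
    by (intro set_integrable_abs set_integral_diff(1) u const)
  have "(LINT x:Q|M. \<bar>u x - m\<bar>) \<le> (LINT x:Q|M. \<bar>u x - c\<bar> + \<bar>c - m\<bar>)"
    by (intro set_integral_mono set_integrable_abs set_integral_diff(1) set_integral_add(1) u const int_c)
      auto
  also have "\<dots> = (LINT x:Q|M. \<bar>u x - c\<bar>) + \<mu> * \<bar>c - m\<bar>"
    using int_c const by (simp add: set_integral_add(2) integral_const)
  also have "\<mu> * \<bar>c - m\<bar> \<le> (LINT x:Q|M. \<bar>u x - c\<bar>)"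
  proof (cases "\<mu> = 0")
    case True
    then show ?thesis
      unfolding set_lebesgue_integral_def by (auto intro!: integral_nonneg_AE simp: indicator_def)
  next
    case False
    have "\<mu> * (c - m) = (LINT x:Q|M. c - u x)"
      using False u const by (simp add: m_def set_integral_diff(2) integral_const field_simps)
    then have "\<mu> * \<bar>c - m\<bar> = \<bar>LINT x:Q|M. c - u x\<bar>"
      unfolding \<mu>_def by (metis abs_mult abs_of_nonneg measure_nonneg)
    also have "\<dots> \<le> (LINT x:Q|M. \<bar>c - u x\<bar>)"
      unfolding set_lebesgue_integral_def
      using integral_abs_bound[of M "\<lambda>x. indicator Q x *\<^sub>R (c - u x)"] by (simp add: abs_mult)
    finally show ?thesis
      by (simp add: abs_minus_commute)
  qed
  finally show ?thesis
    by (simp add: m_def \<mu>_def)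
qed

lemma set_integral_le_choquet:
  fixes N :: "'a::metric_space measure" and u :: "'a \<Rightarrow> real"
  assumes N: "sets N = sets borel" and K: "0 < K"
    and growth: "\<And>x r. 0 \<le> r \<Longrightarrow> emeasure N (ball x r) \<le> ennreal K * ennreal (omega \<beta> * r powr \<beta>)"
    and qc: "hc_quasicontinuous_on \<beta> Q0 u" and fin: "choquet \<beta> Q0 (\<lambda>x. \<bar>u x\<bar>) < \<infinity>"
    and Q: "closed Q" "Q \<subseteq> Q0" "emeasure N Q < \<infinity>"
  shows "set_integrable (completion N) Q u"
    and "ennreal (LINT x:Q|completion N. \<bar>u x - c\<bar>) \<le> ennreal K * choquet \<beta> Q (\<lambda>x. \<bar>u x - c\<bar>)"
proof -
  define M where "M = completion N"
  have Q_sets: "Q \<in> sets M"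
    using Q(1) N by (simp add: M_def)
  have Q_finite: "emeasure M Q < \<infinity>"
    using Q(1,3) N by (simp add: M_def)
  have balls: "ball x r \<in> sets M" for x r
    using N by (simp add: M_def)
  have growth_M: "emeasure M (ball x r) \<le> ennreal K * ennreal (omega \<beta> * r powr \<beta>)" if "0 \<le> r" for x r
    using growth[OF that] N by (simp add: M_def)
  have uQ: "(\<lambda>x. indicator Q x * u x) \<in> borel_measurable M"
    unfolding M_def by (rule measurable_completion_quasicontinuous[OF N K growth qc Q(1,2)])
  have nn_le: "(\<integral>\<^sup>+x. ennreal (indicator Q x * \<bar>u x - c\<bar>) \<partial>M) \<le> ennreal K * choquet \<beta> Q (\<lambda>x. \<bar>u x - c\<bar>)"
    for c
  proof -
    have "(\<integral>\<^sup>+x. ennreal (indicator Q x * \<bar>u x - c\<bar>) \<partial>M) =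
        (\<integral>\<^sup>+x. indicator Q x * ennreal \<bar>indicator Q x * u x - c\<bar> \<partial>M)"
      by (intro nn_integral_cong) (auto simp: indicator_def)
    also have "\<dots> \<le> ennreal K * choquet \<beta> Q (\<lambda>x. \<bar>indicator Q x * u x - c\<bar>)"
      using uQ by (intro nn_integral_le_choquet[OF balls K growth_M _ _ Q_sets Q_finite]) auto
    also have "choquet \<beta> Q (\<lambda>x. \<bar>indicator Q x * u x - c\<bar>) = choquet \<beta> Q (\<lambda>x. \<bar>u x - c\<bar>)"
      by (rule choquet_cong) simp
    finally show ?thesis .
  qed
  show integrable: "set_integrable (completion N) Q u"
    unfolding set_integrable_def M_def[symmetric]
  proof (rule integrableI_bounded)
    show "(\<lambda>x. indicator Q x *\<^sub>R u x) \<in> borel_measurable M"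
      using uQ by simp
    have "(\<integral>\<^sup>+x. ennreal (norm (indicator Q x *\<^sub>R u x)) \<partial>M) \<le> ennreal K * choquet \<beta> Q (\<lambda>x. \<bar>u x - 0\<bar>)"
      using nn_le[of 0] by (simp add: abs_mult)
    also have "\<dots> \<le> ennreal K * choquet \<beta> Q0 (\<lambda>x. \<bar>u x\<bar>)"
      using Q(2) by (simp add: choquet_mono_set mult_left_mono)
    also have "\<dots> < \<infinity>"
      using fin by (simp add: ennreal_mult_less_top)
    finally show "(\<integral>\<^sup>+x. ennreal (norm (indicator Q x *\<^sub>R u x)) \<partial>M) < \<infinity>" .
  qed
  have "set_integrable M Q (\<lambda>x. \<bar>u x - c\<bar>)"
    using integrable unfolding M_def[symmetric]
    by (intro set_integrable_abs set_integral_diff(1) set_integrable_const_real Q_sets Q_finite)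
  then have "ennreal (LINT x:Q|M. \<bar>u x - c\<bar>) = (\<integral>\<^sup>+x. ennreal (indicator Q x * \<bar>u x - c\<bar>) \<partial>M)"
    unfolding set_lebesgue_integral_def set_integrable_def
    by (subst nn_integral_eq_integral) auto
  then show "ennreal (LINT x:Q|completion N. \<bar>u x - c\<bar>) \<le> ennreal K * choquet \<beta> Q (\<lambda>x. \<bar>u x - c\<bar>)"
    using nn_le[of c] by (simp add: M_def)
qed

lemma mean_oscillation_le_bmo_content_norm:
  fixes N :: "(real^'n) measure" and u :: "real^'n \<Rightarrow> real"
  assumes N: "sets N = sets borel" and K: "0 < K"
    and growth: "\<And>x r. 0 \<le> r \<Longrightarrow> emeasure N (ball x r) \<le> ennreal K * ennreal (omega \<beta> * r powr \<beta>)"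
    and u: "u \<in> BMO_content \<beta> Q0"
    and Q: "closed Q" "Q \<subseteq> cube c r" "cube c r \<subseteq> Q0" "0 < r" "emeasure N Q = ennreal (r powr \<beta>)"
  shows "set_integrable (completion N) Q u"
    and "ennreal ((LINT x:Q|completion N. \<bar>u x - (LINT y:Q|completion N. u y) / measure (completion N) Q\<bar>)
          / measure (completion N) Q) \<le> ennreal (2 * K) * bmo_content_norm \<beta> Q0 u"
proof -
  define M where "M = completion N"
  have qc: "hc_quasicontinuous_on \<beta> Q0 u" and fin: "choquet \<beta> Q0 (\<lambda>x. \<bar>u x\<bar>) < \<infinity>"
    using u by (auto simp: BMO_content_def L1_content_def)
  have Q_sets: "Q \<in> sets M"
    using Q(1) N by (simp add: M_def)
  have "emeasure M Q = ennreal (r powr \<beta>)"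
    using Q(1,5) N by (simp add: M_def)
  then have Q_finite: "emeasure M Q < \<infinity>" and measure_Q: "measure M Q = r powr \<beta>"
    by (simp_all add: measure_def)
  have Q_sub: "Q \<subseteq> Q0"
    using Q(2,3) by blast
  show integrable: "set_integrable (completion N) Q u"
    using Q(1,5) Q_sub by (intro set_integral_le_choquet(1)[OF N K growth qc fin]) auto
  define osc where "osc = (LINT x:Q|M. \<bar>u x - (LINT y:Q|M. u y) / measure M Q\<bar>)"
  have "ennreal (osc / measure M Q) \<le>
      ennreal (2 * K) * (INF a. ennreal (r powr - \<beta>) * choquet \<beta> (cube c r) (\<lambda>x. \<bar>u x - a\<bar>))"
  proof (rule ennreal_le_mult_INF)
    show "0 < ennreal (2 * K)" "ennreal (2 * K) < top"
      using K by auto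
    fix a :: real
    have "osc \<le> 2 * (LINT x:Q|M. \<bar>u x - a\<bar>)"
      unfolding osc_def M_def using integrable Q_sets Q_finite
      by (intro set_integral_abs_diff_average_le) (auto simp: M_def)
    then have "ennreal (osc / measure M Q) \<le> ennreal (2 * r powr - \<beta>) * ennreal (LINT x:Q|M. \<bar>u x - a\<bar>)"
      by (simp add: measure_Q powr_minus divide_right_mono field_simps ennreal_mult'[symmetric] ennreal_leI)
    also have "\<dots> \<le> ennreal (2 * r powr - \<beta>) * (ennreal K * choquet \<beta> (cube c r) (\<lambda>x. \<bar>u x - a\<bar>))"
    proof (intro mult_left_mono)
      have "ennreal (LINT x:Q|M. \<bar>u x - a\<bar>) \<le> ennreal K * choquet \<beta> Q (\<lambda>x. \<bar>u x - a\<bar>)"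
        unfolding M_def using Q(1,5) Q_sub by (intro set_integral_le_choquet(2)[OF N K growth qc fin]) auto
      also have "\<dots> \<le> ennreal K * choquet \<beta> (cube c r) (\<lambda>x. \<bar>u x - a\<bar>)"
        using Q(2) by (intro mult_left_mono choquet_mono_set) auto
      finally show "ennreal (LINT x:Q|M. \<bar>u x - a\<bar>) \<le> ennreal K * choquet \<beta> (cube c r) (\<lambda>x. \<bar>u x - a\<bar>)" .
    qed simp
    also have "\<dots> = ennreal (2 * K) * (ennreal (r powr - \<beta>) * choquet \<beta> (cube c r) (\<lambda>x. \<bar>u x - a\<bar>))"
      using K by (simp add: ennreal_mult mult_ac)
    finally show "ennreal (osc / measure M Q) \<le>
        ennreal (2 * K) * (ennreal (r powr - \<beta>) * choquet \<beta> (cube c r) (\<lambda>x. \<bar>u x - a\<bar>))" .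
  qed
  also have "\<dots> \<le> ennreal (2 * K) * bmo_content_norm \<beta> Q0 u"
  proof (intro mult_left_mono)
    have "(c, r) \<in> subcube_data Q0"
      using Q(3,4) by (simp add: subcube_data_def)
    then show "(INF a. ennreal (r powr - \<beta>) * choquet \<beta> (cube c r) (\<lambda>x. \<bar>u x - a\<bar>)) \<le> bmo_content_norm \<beta> Q0 u"
      unfolding bmo_content_norm_def by (rule SUP_upper2) simp
  qed simp
  finally show "ennreal ((LINT x:Q|completion N. \<bar>u x - (LINT y:Q|completion N. u y) / measure (completion N) Q\<bar>)
      / measure (completion N) Q) \<le> ennreal (2 * K) * bmo_content_norm \<beta> Q0 u"
    by (simp add: osc_def M_def)
qed

lemma BMO_content_imp_BMO_classical:
  fixes N :: "(real^'n) measure" and u :: "real^'n \<Rightarrow> real"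
  assumes N: "sets N = sets borel" and K: "0 < K"
    and growth: "\<And>x r. 0 \<le> r \<Longrightarrow> emeasure N (ball x r) \<le> ennreal K * ennreal (omega \<beta> * r powr \<beta>)"
    and u: "u \<in> BMO_content \<beta> Q0"
    and Qs: "\<And>Q. Q \<in> Qs \<Longrightarrow> closed Q \<and>
      (\<exists>c r. 0 < r \<and> Q \<subseteq> cube c r \<and> cube c r \<subseteq> Q0 \<and> emeasure N Q = ennreal (r powr \<beta>))"
  shows "u \<in> BMO_classical (completion N) Qs"
    and "bmo_norm (completion N) Qs u \<le> ennreal (2 * K) * bmo_content_norm \<beta> Q0 u"
proof -
  have integrable: "set_integrable (completion N) Q u"
    and oscillation: "ennreal ((LINT x:Q|completion N. \<bar>u x - (LINT y:Q|completion N. u y) / measure (completion N) Q\<bar>)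
          / measure (completion N) Q) \<le> ennreal (2 * K) * bmo_content_norm \<beta> Q0 u"
    if "Q \<in> Qs" for Q
    using Qs[OF that] mean_oscillation_le_bmo_content_norm[OF N K growth u] by blast+
  show bound: "bmo_norm (completion N) Qs u \<le> ennreal (2 * K) * bmo_content_norm \<beta> Q0 u"
    unfolding bmo_norm_def by (intro SUP_least oscillation)
  moreover have "bmo_content_norm \<beta> Q0 u < top"
    using u by (simp add: BMO_content_def)
  ultimately have "bmo_norm (completion N) Qs u < top"
    by (metis ennreal_mult_less_top ennreal_less_top order.strict_trans1)
  then show "u \<in> BMO_classical (completion N) Qs"
    using integrable unfolding BMO_classical_def by auto
qed

section \<open>Traces on planes and the case of full dimension\<close>

lemma BMO_content_imp_BMO_plane:
  fixes u :: "real^'n \<Rightarrow> real" and S :: "'n set"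
  assumes k: "card S = k" "0 < k" and u: "u \<in> BMO_content (real k) (cube a0 l0)"
  shows "u \<in> BMO_classical (plane_measure S a) (plane_cubes S a (cube a0 l0))"
    and "bmo_norm (plane_measure S a) (plane_cubes S a (cube a0 l0)) u
      \<le> ennreal (2 * (2 ^ k / omega (real k))) * bmo_content_norm (real k) (cube a0 l0) u"
proof -
  define N where "N = distr (Pi\<^sub>M S (\<lambda>_. lborel)) borel (plane_embedding S a)"
  have plane_measure: "plane_measure S a = completion N"
    unfolding N_def by (rule plane_measure_eq_completion)
  have N_sets: "sets N = sets borel"
    by (simp add: N_def)
  have omega_k: "0 < omega (real k)"
    using k by (intro omega_pos) auto
  then have K: "0 < 2 ^ k / omega (real k)"
    by simp
  have growth: "emeasure N (ball x r) \<le> ennreal (2 ^ k / omega (real k)) * ennreal (omega (real k) * r powr real k)"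
    if r: "0 \<le> r" for x r
  proof -
    have "emeasure N (ball x r) \<le> ennreal ((2 * r) ^ k)"
      unfolding N_def using emeasure_plane_ball_le[OF r, where S=S and a=a and x=x] k(1) by simp
    also have "(2 * r) ^ k = (2 ^ k / omega (real k)) * (omega (real k) * r powr real k)"
      using omega_k r k by (simp add: powr_realpow' power_mult_distrib)
    finally show ?thesis
      using omega_k r by (subst ennreal_mult[symmetric]) auto
  qed
  have Qs: "closed Q \<and> (\<exists>c r. 0 < r \<and> Q \<subseteq> cube c r \<and> cube c r \<subseteq> cube a0 l0 \<and>
      emeasure N Q = ennreal (r powr real k))" if "Q \<in> plane_cubes S a (cube a0 l0)" for Q
  proof -
    have "S \<noteq> {}"
      using k by auto
    then show ?thesis
      using plane_cubes_subset_cubes[OF _ that] k unfolding N_def by (metis powr_realpow)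
  qed
  show "u \<in> BMO_classical (plane_measure S a) (plane_cubes S a (cube a0 l0))"
    unfolding plane_measure by (rule BMO_content_imp_BMO_classical(1)[OF N_sets K growth u Qs])
  show "bmo_norm (plane_measure S a) (plane_cubes S a (cube a0 l0)) u
      \<le> ennreal (2 * (2 ^ k / omega (real k))) * bmo_content_norm (real k) (cube a0 l0) u"
    unfolding plane_measure by (rule BMO_content_imp_BMO_classical(2)[OF N_sets K growth u Qs])
qed

lemma choquet_abs_diff_le_set_integral:
  fixes v :: "real^'n \<Rightarrow> real"
  assumes Q: "Q \<in> sets lebesgue" "bounded Q" and v: "set_integrable lebesgue Q v"
  shows "choquet (real CARD('n)) Q (\<lambda>x. \<bar>v x - a\<bar>) \<le>
    ennreal (omega (real CARD('n)) * (2 * real CARD('n)) ^ CARD('n)) * ennreal (LINT x:Q|lebesgue. \<bar>v x - a\<bar>)"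
proof -
  define f where "f x = indicator Q x * \<bar>v x - a\<bar>" for x
  have "emeasure lebesgue Q < \<infinity>"
    using bounded_set_imp_lmeasurable[OF Q(2,1)] unfolding fmeasurable_def by blast
  then have "set_integrable lebesgue Q (\<lambda>x. \<bar>v x - a\<bar>)"
    using Q by (intro set_integrable_abs set_integral_diff(1) v set_integrable_const_real) auto
  then have f: "integrable lebesgue f"
    unfolding f_def set_integrable_def by simp
  have "choquet (real CARD('n)) Q (\<lambda>x. \<bar>v x - a\<bar>) = choquet (real CARD('n)) Q f"
    by (rule choquet_cong) (simp add: f_def)
  also have "\<dots> \<le> ennreal (omega (real CARD('n)) * (2 * real CARD('n)) ^ CARD('n)) *
      (\<integral>\<^sup>+x. indicator Q x * ennreal (f x) \<partial>lebesgue)"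
    using Q f by (intro choquet_le_nn_integral) (auto simp: f_def)
  also have "(\<integral>\<^sup>+x. indicator Q x * ennreal (f x) \<partial>lebesgue) = (\<integral>\<^sup>+x. ennreal (f x) \<partial>lebesgue)"
    by (intro nn_integral_cong) (simp add: f_def indicator_def)
  also have "\<dots> = ennreal (LINT x:Q|lebesgue. \<bar>v x - a\<bar>)"
    using f unfolding set_lebesgue_integral_def f_def by (subst nn_integral_eq_integral) auto
  finally show ?thesis .
qed

lemma bmo_content_norm_le_bmo_norm:
  fixes v :: "real^'n \<Rightarrow> real"
  assumes integrable: "\<And>Q. Q \<in> subcubes Q0 \<Longrightarrow> set_integrable lebesgue Q v"
  shows "bmo_content_norm (real CARD('n)) Q0 v \<le>
    ennreal (omega (real CARD('n)) * (2 * real CARD('n)) ^ CARD('n)) * bmo_norm lebesgue (subcubes Q0) v"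
  unfolding bmo_content_norm_def
proof (rule SUP_least, clarify)
  define d where "d = CARD('n)"
  define Kc where "Kc = omega (real d) * (2 * real d) ^ d"
  fix c r assume "(c, r) \<in> subcube_data Q0"
  then have r: "0 < r" and Q_in: "cube c r \<in> subcubes Q0"
    by (auto simp: subcube_data_def subcubes_def)
  define Q where "Q = cube c r"
  have "cube c r \<in> sets lborel"
    by (simp add: cube_cbox)
  then have "measure lebesgue Q = r ^ d"
    using r by (simp add: Q_def d_def emeasure_lborel_cube measure_def)
  define avg where "avg = (LINT y:Q|lebesgue. v y) / measure lebesgue Q"
  define osc where "osc = (LINT x:Q|lebesgue. \<bar>v x - avg\<bar>)"
  have "(INF a. ennreal (r powr - real d) * choquet (real d) Q (\<lambda>x. \<bar>v x - a\<bar>))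
      \<le> ennreal (r powr - real d) * choquet (real d) Q (\<lambda>x. \<bar>v x - avg\<bar>)"
    by (rule INF_lower) simp
  also have "\<dots> \<le> ennreal (r powr - real d) * (ennreal Kc * ennreal osc)"
    unfolding Kc_def d_def osc_def using integrable Q_in
    by (intro mult_left_mono choquet_abs_diff_le_set_integral) (auto simp: Q_def cube_cbox)
  also have "\<dots> = ennreal Kc * ennreal (osc / measure lebesgue Q)"
  proof -
    have "0 \<le> osc"
      unfolding osc_def set_lebesgue_integral_def by (auto intro!: integral_nonneg_AE)
    moreover have "r powr - real d = 1 / r ^ d"
      using r by (simp add: powr_minus powr_realpow divide_inverse)
    ultimately show ?thesis
      using r \<open>measure lebesgue Q = r ^ d\<close> by (simp add: ennreal_mult[symmetric] mult_ac)
  qed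
  also have "\<dots> \<le> ennreal Kc * bmo_norm lebesgue (subcubes Q0) v"
    unfolding bmo_norm_def osc_def avg_def Q_def using Q_in by (intro mult_left_mono SUP_upper2) auto
  finally show "(INF a. ennreal (snd (c, r) powr - real CARD('n)) *
      choquet (real CARD('n)) (cube (fst (c, r)) (snd (c, r))) (\<lambda>x. \<bar>v x - a\<bar>))
      \<le> ennreal (omega (real CARD('n)) * (2 * real CARD('n)) ^ CARD('n)) * bmo_norm lebesgue (subcubes Q0) v"
    by (simp add: Q_def Kc_def d_def)
qed

lemma BMO_content_imp_BMO_lebesgue:
  fixes u :: "real^'n \<Rightarrow> real"
  assumes u: "u \<in> BMO_content (real CARD('n)) Q0"
  shows "u \<in> BMO_classical lebesgue (subcubes Q0)"
    and "bmo_norm lebesgue (subcubes Q0) u \<le> ennreal 2 * bmo_content_norm (real CARD('n)) Q0 u"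
    and "bmo_content_norm (real CARD('n)) Q0 u \<le>
      ennreal (omega (real CARD('n)) * (2 * real CARD('n)) ^ CARD('n)) * bmo_norm lebesgue (subcubes Q0) u"
proof -
  have growth: "emeasure lborel (ball x r) \<le> ennreal 1 * ennreal (omega (real CARD('n)) * r powr real CARD('n))"
    if "0 \<le> r" for x :: "real^'n" and r
    using that by (simp add: emeasure_lborel_ball_cart)
  have Qs: "closed Q \<and> (\<exists>c r. 0 < r \<and> Q \<subseteq> cube c r \<and> cube c r \<subseteq> Q0 \<and>
      emeasure lborel Q = ennreal (r powr real CARD('n)))" if Q_in: "Q \<in> subcubes Q0" for Q
  proof -
    obtain c r where Q: "Q = cube c r" "0 < r" "cube c r \<subseteq> Q0"
      using Q_in unfolding subcubes_def subcube_data_def by auto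
    moreover have "closed (cube c r)"
      by (simp add: cube_cbox closed_cbox)
    moreover have "emeasure lborel (cube c r) = ennreal (r powr real CARD('n))"
      using Q(2) by (simp add: emeasure_lborel_cube powr_realpow)
    ultimately show ?thesis
      by blast
  qed
  show BMO: "u \<in> BMO_classical lebesgue (subcubes Q0)"
    by (rule BMO_content_imp_BMO_classical(1)[OF _ _ growth u Qs]) auto
  show "bmo_norm lebesgue (subcubes Q0) u \<le> ennreal 2 * bmo_content_norm (real CARD('n)) Q0 u"
    using BMO_content_imp_BMO_classical(2)[OF _ _ growth u Qs] by simp
  show "bmo_content_norm (real CARD('n)) Q0 u \<le>
      ennreal (omega (real CARD('n)) * (2 * real CARD('n)) ^ CARD('n)) * bmo_norm lebesgue (subcubes Q0) u"
    using BMO by (intro bmo_content_norm_le_bmo_norm) (simp add: BMO_classical_def)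
qed

lemma BMO_classical_imp_BMO_content:
  fixes v :: "real^'n \<Rightarrow> real"
  assumes l0: "0 < l0" and v: "v \<in> BMO_classical lebesgue (subcubes (cube a0 l0))"
  shows "v \<in> BMO_content (real CARD('n)) (cube a0 l0)"
proof -
  define Q0 where "Q0 = cube a0 l0"
  define Kc where "Kc = omega (real CARD('n)) * (2 * real CARD('n)) ^ CARD('n)"
  have integrable: "\<And>Q. Q \<in> subcubes Q0 \<Longrightarrow> set_integrable lebesgue Q v"
    and bmo_finite: "bmo_norm lebesgue (subcubes Q0) v < \<infinity>"
    using v by (auto simp: BMO_classical_def Q0_def)
  have "Q0 \<in> subcubes Q0"
    using l0 unfolding subcubes_def subcube_data_def Q0_def by force
  then have vQ0: "set_integrable lebesgue Q0 v"
    by (rule integrable)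
  define F where "F x = indicator Q0 x * v x" for x
  have F: "F \<in> borel_measurable lebesgue"
    using vQ0 unfolding F_def set_integrable_def by (simp add: borel_measurable_integrable)
  have Q0_sets: "Q0 \<in> sets lebesgue" and Q0_bounded: "bounded Q0"
    by (simp_all add: Q0_def cube_cbox)
  have "hc_quasicontinuous_on (real CARD('n)) Q0 F"
    by (rule hc_quasicontinuous_on_lebesgue_measurable[OF F Q0_bounded])
  then have qc: "hc_quasicontinuous_on (real CARD('n)) Q0 v"
    by (rule hc_quasicontinuous_on_cong[rotated]) (simp add: F_def)
  have "(\<integral>\<^sup>+x. indicator Q0 x * ennreal \<bar>F x\<bar> \<partial>lebesgue) = (\<integral>\<^sup>+x. ennreal (norm (indicator Q0 x *\<^sub>R v x)) \<partial>lebesgue)"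
    by (intro nn_integral_cong) (auto simp: F_def indicator_def)
  also have "\<dots> < \<infinity>"
    using vQ0 unfolding set_integrable_def by (simp add: integrable_iff_bounded)
  finally have F_finite: "(\<integral>\<^sup>+x. indicator Q0 x * ennreal \<bar>F x\<bar> \<partial>lebesgue) < \<infinity>" .
  have "choquet (real CARD('n)) Q0 (\<lambda>x. \<bar>v x\<bar>) = choquet (real CARD('n)) Q0 (\<lambda>x. \<bar>F x\<bar>)"
    by (rule choquet_cong) (simp add: F_def)
  also have "\<dots> \<le> ennreal Kc * (\<integral>\<^sup>+x. indicator Q0 x * ennreal \<bar>F x\<bar> \<partial>lebesgue)"
    unfolding Kc_def using F by (intro choquet_le_nn_integral Q0_sets Q0_bounded) auto
  also have "\<dots> < \<infinity>"
    using F_finite by (simp add: ennreal_mult_less_top)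
  finally have "choquet (real CARD('n)) Q0 (\<lambda>x. \<bar>v x\<bar>) < \<infinity>" .
  moreover have "bmo_content_norm (real CARD('n)) Q0 v < \<infinity>"
  proof -
    have "bmo_content_norm (real CARD('n)) Q0 v \<le> ennreal Kc * bmo_norm lebesgue (subcubes Q0) v"
      unfolding Kc_def using integrable by (rule bmo_content_norm_le_bmo_norm)
    also have "\<dots> < \<infinity>"
      using bmo_finite by (simp add: ennreal_mult_less_top)
    finally show ?thesis .
  qed
  ultimately show ?thesis
    using qc by (simp add: BMO_content_def L1_content_def Q0_def)
qed

theorem theorem1p2:
  fixes a0 :: "real^'n" and l0 :: real and k :: nat
  assumes "0 < l0" and "1 \<le> k" and "k \<le> CARD('n)"
  shows "\<exists>C>0.
    (\<forall>u \<in> BMO_content (real k) (cube a0 l0). \<forall>S a. card S = k \<longrightarrow>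
        u \<in> BMO_classical (plane_measure S a) (plane_cubes S a (cube a0 l0)) \<and>
        bmo_norm (plane_measure S a) (plane_cubes S a (cube a0 l0)) u
          \<le> ennreal C * bmo_content_norm (real k) (cube a0 l0) u) \<and>
    (k = CARD('n) \<longrightarrow>
       (\<forall>u \<in> BMO_content (real k) (cube a0 l0).
          u \<in> BMO_classical lebesgue (subcubes (cube a0 l0)) \<and>
          ennreal (1 / C) * bmo_content_norm (real k) (cube a0 l0) u
            \<le> bmo_norm lebesgue (subcubes (cube a0 l0)) u \<and>
          bmo_norm lebesgue (subcubes (cube a0 l0)) u
            \<le> ennreal C * bmo_content_norm (real k) (cube a0 l0) u) \<and>
       (\<forall>v \<in> BMO_classical lebesgue (subcubes (cube a0 l0)).
          \<exists>u \<in> BMO_content (real k) (cube a0 l0).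
            AE x in lebesgue. x \<in> cube a0 l0 \<longrightarrow> u x = v x))"
proof -
  define C where
    "C = max (2 * (2 ^ k / omega (real k))) (max 2 (omega (real CARD('n)) * (2 * real CARD('n)) ^ CARD('n)))"
  have k: "0 < k"
    using assms(2) by simp
  then have "0 < omega (real k)"
    by (intro omega_pos) auto
  then have C: "0 < C" "2 * (2 ^ k / omega (real k)) \<le> C" "2 \<le> C"
    "omega (real CARD('n)) * (2 * real CARD('n)) ^ CARD('n) \<le> C"
    unfolding C_def by auto
  have planes: "u \<in> BMO_classical (plane_measure S a) (plane_cubes S a (cube a0 l0)) \<and>
      bmo_norm (plane_measure S a) (plane_cubes S a (cube a0 l0)) u \<le> ennreal C * bmo_content_norm (real k) (cube a0 l0) u"
    if "u \<in> BMO_content (real k) (cube a0 l0)" "card S = k" for u S a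
    using BMO_content_imp_BMO_plane[OF that(2) k that(1)] ennreal_le_mult_weaken C(2) by blast
  have full_dimension: "u \<in> BMO_classical lebesgue (subcubes (cube a0 l0)) \<and>
      ennreal (1 / C) * bmo_content_norm (real k) (cube a0 l0) u \<le> bmo_norm lebesgue (subcubes (cube a0 l0)) u \<and>
      bmo_norm lebesgue (subcubes (cube a0 l0)) u \<le> ennreal C * bmo_content_norm (real k) (cube a0 l0) u"
    if "k = CARD('n)" "u \<in> BMO_content (real k) (cube a0 l0)" for u
  proof -
    note lebesgue = BMO_content_imp_BMO_lebesgue[OF that(2)[unfolded that(1)]]
    show ?thesis
      using lebesgue(1) ennreal_inverse_mult_le[OF C(1) ennreal_le_mult_weaken[OF lebesgue(3) C(4)]]
        ennreal_le_mult_weaken[OF lebesgue(2) C(3)] that(1)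
      by simp
  qed
  have converse: "v \<in> BMO_content (real k) (cube a0 l0)"
    if "k = CARD('n)" "v \<in> BMO_classical lebesgue (subcubes (cube a0 l0))" for v
    using BMO_classical_imp_BMO_content[OF assms(1) that(2)] that(1) by simp
  show ?thesis
    using C(1) planes full_dimension converse by (intro exI[of _ C]) auto
qed

end
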